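(* Let $h_0>0$, $U>0$, $k\ne0$, and let $A\in\mathfrak A_X$ (regarded as an operator on $\mathcal H^{\rm hf}_\Lambda$) have $D_\Lambda$-grade $k$, with $|k|U>h_0|X|$. Then $h\mapsto\mathcal I_h(A)$ is analytic in a neighbourhood of $[-h_0,h_0]$, and for $|h|\le h_0$, \[ \partial_h\mathcal I_h(A)=\mathcal I_h\bigl(\mathrm{ad}_{M_\Lambda}(\mathcal I_h(A))\bigr),\qquad \|\partial_h\mathcal I_h(A)\|\le\frac{|X|}{(|k|U-|h||X|)^2}\|A\|\le\frac{|X|}{(|k|U-h_0|X|)^2}\|A\|. \]
   Context: $\Lambda=(\mathbb Z/L\mathbb Z)^d$, $L\in2\mathbb N$; fermionic Fock space over $\ell^2(\Lambda)\otimes\mathbb C^2$ with CAR operators $c_{x\sigma}$, $n_{x\sigma}=c^*_{x\sigma}c_{x\sigma}$, $n_x=n_{x\uparrow}+n_{x\downarrow}$; $\mathcal H^{\rm hf}_\Lambda=\ker(\sum_xn_x-|\Lambda|)$; $D_\Lambda=\sum_xn_{x\uparrow}n_{x\downarrow}$; $\eta_x=(-1)^{x_1+\dots+x_d}$, $M_\Lambda=\sum_x\eta_x\frac12(n_{x\uparrow}-n_{x\downarrow})$; $\mathfrak A_X$ the algebra generated by $c_{x\sigma},c^*_{x\sigma}$, $x\in X$; $\mathrm{ad}_S(A)=[S,A]$. "Grade $k$" means $A=\sum_mP_{m+k}AP_m$ with $P_m$ the spectral projection of $D_\Lambda$ on $\mathcal H^{\rm hf}_\Lambda$ at eigenvalue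 $m$. For such $A$ and $|h|\le h_0$, $\mathcal I_h(A):=\frac1{kU}\sum_{n\ge0}(\frac h{kU})^n\mathrm{ad}^{\,n}_{M_\Lambda}(A)$. *)

theory Defs
  imports "HOL-Complex_Analysis.Complex_Analysis"
begin

text \<open>A site of the torus (Z/LZ)^d is a list of length d with entries in {0..<L};
  a mode is a site together with a spin (True = up, False = down).
  The occupation-number basis of Fock space is indexed by finite sets of modes.
  Operators are represented by their matrices in this basis:
  B S T = matrix element between basis vectors S (row) and T (column).\<close>

type_synonym site = "nat list"
type_synonym mode = "site \<times> bool"
type_synonym fop = "mode set \<Rightarrow> mode set \<Rightarrow> complex"

definition sites :: "nat \<Rightarrow> nat \<Rightarrow> site set" where
  "sites d L = {x. length x = d \<and> (\<forall>i<d. x ! i < L)}"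

definition modes :: "nat \<Rightarrow> nat \<Rightarrow> mode set" where
  "modes d L = sites d L \<times> UNIV"

definition configs :: "nat \<Rightarrow> nat \<Rightarrow> mode set set" where
  "configs d L = Pow (modes d L)"

text \<open>Linear ordering of modes used for the Jordan-Wigner signs.\<close>
definition mode_index :: "nat \<Rightarrow> mode \<Rightarrow> nat" where
  "mode_index L j = 2 * (\<Sum>i<length (fst j). fst j ! i * L ^ i) + (if snd j then 0 else 1)"

definition op_id :: "nat \<Rightarrow> nat \<Rightarrow> fop" where
  "op_id d L S T = (if S = T \<and> S \<in> configs d L then 1 else 0)"

definition op_mult :: "nat \<Rightarrow> nat \<Rightarrow> fop \<Rightarrow> fop \<Rightarrow> fop" where
  "op_mult d L A B S T = (\<Sum>R\<in>configs d L. A S R * B R T)"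

definition op_comm :: "nat \<Rightarrow> nat \<Rightarrow> fop \<Rightarrow> fop \<Rightarrow> fop" where
  "op_comm d L A B = (\<lambda>S T. op_mult d L A B S T - op_mult d L B A S T)"

definition cre :: "nat \<Rightarrow> nat \<Rightarrow> mode \<Rightarrow> fop" where
  "cre d L j S T =
     (if T \<in> configs d L \<and> j \<in> modes d L \<and> j \<notin> T \<and> S = insert j T
      then (-1) ^ card {i\<in>T. mode_index L i < mode_index L j} else 0)"

definition ann :: "nat \<Rightarrow> nat \<Rightarrow> mode \<Rightarrow> fop" where
  "ann d L j S T = cnj (cre d L j T S)"

definition num :: "nat \<Rightarrow> nat \<Rightarrow> mode \<Rightarrow> fop" where
  "num d L j = op_mult d L (cre d L j) (ann d L j)"

definition Dop :: "nat \<Rightarrow> nat \<Rightarrow> fop" where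
  "Dop d L = (\<lambda>S T. \<Sum>x\<in>sites d L. op_mult d L (num d L (x, True)) (num d L (x, False)) S T)"

definition eta :: "site \<Rightarrow> complex" where
  "eta x = (-1) ^ sum_list x"

definition Mop :: "nat \<Rightarrow> nat \<Rightarrow> fop" where
  "Mop d L = (\<lambda>S T. \<Sum>x\<in>sites d L.
      eta x * (num d L (x, True) S T - num d L (x, False) S T) / 2)"

definition Nop :: "nat \<Rightarrow> nat \<Rightarrow> fop" where
  "Nop d L = (\<lambda>S T. \<Sum>x\<in>sites d L. num d L (x, True) S T + num d L (x, False) S T)"

text \<open>Half-filled subspace: kernel of N - |Lambda| (N is diagonal in the occupation basis),
  and the orthogonal projection onto it.\<close>
definition hf_configs :: "nat \<Rightarrow> nat \<Rightarrow> mode set set" where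
  "hf_configs d L = {S\<in>configs d L. Nop d L S S = of_nat (card (sites d L))}"

definition P_hf :: "nat \<Rightarrow> nat \<Rightarrow> fop" where
  "P_hf d L S T = (if S = T \<and> S \<in> hf_configs d L then 1 else 0)"

text \<open>A regarded as an operator on the half-filled space.\<close>
definition compress :: "nat \<Rightarrow> nat \<Rightarrow> fop \<Rightarrow> fop" where
  "compress d L A = op_mult d L (P_hf d L) (op_mult d L A (P_hf d L))"

definition P_D :: "nat \<Rightarrow> nat \<Rightarrow> int \<Rightarrow> fop" where
  "P_D d L m S T = (if S = T \<and> S \<in> hf_configs d L \<and> Dop d L S S = of_int m then 1 else 0)"

text \<open>Grade k: A = sum_m P_{m+k} A P_m (m ranges over all eigenvalues 0..|Lambda| of D).\<close>
definition has_grade :: "nat \<Rightarrow> nat \<Rightarrow> int \<Rightarrow> fop \<Rightarrow> bool" where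
  "has_grade d L k A \<longleftrightarrow>
     compress d L A = (\<lambda>S T. \<Sum>m\<in>{0..int (card (sites d L))}.
        op_mult d L (P_D d L (m + k)) (op_mult d L A (P_D d L m)) S T)"

inductive_set loc_alg :: "nat \<Rightarrow> nat \<Rightarrow> site set \<Rightarrow> fop set" for d L X where
  unit: "op_id d L \<in> loc_alg d L X"
| cre: "x \<in> X \<Longrightarrow> cre d L (x, \<sigma>) \<in> loc_alg d L X"
| ann: "x \<in> X \<Longrightarrow> ann d L (x, \<sigma>) \<in> loc_alg d L X"
| add: "A \<in> loc_alg d L X \<Longrightarrow> B \<in> loc_alg d L X \<Longrightarrow> (\<lambda>S T. A S T + B S T) \<in> loc_alg d L X"
| smult: "A \<in> loc_alg d L X \<Longrightarrow> (\<lambda>S T. c * A S T) \<in> loc_alg d L X"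
| mult: "A \<in> loc_alg d L X \<Longrightarrow> B \<in> loc_alg d L X \<Longrightarrow> op_mult d L A B \<in> loc_alg d L X"

definition op_norm :: "nat \<Rightarrow> nat \<Rightarrow> fop \<Rightarrow> real" where
  "op_norm d L B = Sup {sqrt (\<Sum>S\<in>configs d L. (cmod (\<Sum>T\<in>configs d L. B S T * v T))\<^sup>2) | v.
        (\<Sum>T\<in>configs d L. (cmod (v T))\<^sup>2) \<le> 1}"

definition ad_M :: "nat \<Rightarrow> nat \<Rightarrow> fop \<Rightarrow> fop" where
  "ad_M d L A = op_comm d L (Mop d L) A"

definition I_op :: "nat \<Rightarrow> nat \<Rightarrow> int \<Rightarrow> real \<Rightarrow> complex \<Rightarrow> fop \<Rightarrow> fop" where
  "I_op d L k U h A = (\<lambda>S T. (1 / (of_int k * of_real U)) *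
      (\<Sum>n. (h / (of_int k * of_real U)) ^ n * ((ad_M d L ^^ n) A) S T))"

end

theory Submission
  imports Defs
begin

(* M_Lambda is diagonal in the occupation-number basis, so ad_M acts on matrices as Schur
   multiplication by differences of its eigenvalues. An element of the local algebra of X only
   connects configurations that agree outside X, and there the eigenvalue difference is the
   difference delta of the staggered magnetisations of X, so |delta| <= |X|. Hence the series
   defining I_h(A) sums entrywise to A_PQ / (kU - h delta_PQ), which is holomorphic for
   |h| |X| < |k| U, with derivative delta A_PQ / (kU - h delta_PQ)^2 = I_h(ad_M I_h(A))_PQ.
   The norm bound follows by expanding this derivative in powers of h delta and using
   ||[m, B]|| <= 2 sup |m| ||B|| for diagonal m. *)

section \<open>Operator norms of matrices over a finite index set\<close>

definition l2_norm :: "'a set \<Rightarrow> ('a \<Rightarrow> complex) \<Rightarrow> real" where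
  "l2_norm C v = L2_set (\<lambda>T. cmod (v T)) C"

definition mat_vec :: "'a set \<Rightarrow> ('a \<Rightarrow> 'a \<Rightarrow> complex) \<Rightarrow> ('a \<Rightarrow> complex) \<Rightarrow> 'a \<Rightarrow> complex" where
  "mat_vec C B v = (\<lambda>S. \<Sum>T\<in>C. B S T * v T)"

definition mat_norm :: "'a set \<Rightarrow> ('a \<Rightarrow> 'a \<Rightarrow> complex) \<Rightarrow> real" where
  "mat_norm C B = Sup {l2_norm C (mat_vec C B v) | v. l2_norm C v \<le> 1}"

definition schur_mult :: "('a \<Rightarrow> 'a \<Rightarrow> complex) \<Rightarrow> ('a \<Rightarrow> 'a \<Rightarrow> complex) \<Rightarrow> 'a \<Rightarrow> 'a \<Rightarrow> complex" where
  "schur_mult f B = (\<lambda>S T. f S T * B S T)"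

lemma l2_norm_nonneg: "0 \<le> l2_norm C v"
  unfolding l2_norm_def by simp

lemma l2_norm_zero [simp]: "l2_norm C (\<lambda>_. 0) = 0"
  unfolding l2_norm_def L2_set_def by simp

lemma l2_norm_scale: "l2_norm C (\<lambda>T. c * v T) = cmod c * l2_norm C v"
  unfolding l2_norm_def by (simp add: norm_mult L2_set_right_distrib)

lemma l2_norm_add_le: "l2_norm C (\<lambda>S. x S + y S) \<le> l2_norm C x + l2_norm C y"
proof -
  have "l2_norm C (\<lambda>S. x S + y S) \<le> L2_set (\<lambda>S. cmod (x S) + cmod (y S)) C"
    unfolding l2_norm_def by (rule L2_set_mono) (auto simp: norm_triangle_ineq)
  also have "\<dots> \<le> l2_norm C x + l2_norm C y"
    unfolding l2_norm_def by (rule L2_set_triangle_ineq)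
  finally show ?thesis .
qed

lemma l2_norm_entry_le: "finite C \<Longrightarrow> T \<in> C \<Longrightarrow> cmod (v T) \<le> l2_norm C v"
  unfolding l2_norm_def by (rule member_le_L2_set) auto

lemma l2_norm_eq_0_iff: "finite C \<Longrightarrow> l2_norm C v = 0 \<longleftrightarrow> (\<forall>T\<in>C. v T = 0)"
  unfolding l2_norm_def by (simp add: L2_set_eq_0_iff)

lemma mat_vec_scale: "mat_vec C B (\<lambda>T. c * v T) = (\<lambda>S. c * mat_vec C B v S)"
  unfolding mat_vec_def by (auto simp: sum_distrib_left intro!: sum.cong)

lemma mat_vec_le_entry_sum:
  assumes "finite C"
  shows "l2_norm C (mat_vec C B v) \<le> (\<Sum>S\<in>C. \<Sum>T\<in>C. cmod (B S T)) * l2_norm C v"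
proof -
  have "l2_norm C (mat_vec C B v) \<le> (\<Sum>S\<in>C. cmod (mat_vec C B v S))"
    unfolding l2_norm_def by (rule L2_set_le_sum) auto
  also have "\<dots> \<le> (\<Sum>S\<in>C. (\<Sum>T\<in>C. cmod (B S T)) * l2_norm C v)"
  proof (rule sum_mono)
    fix S
    have "cmod (mat_vec C B v S) \<le> (\<Sum>T\<in>C. cmod (B S T) * cmod (v T))"
      unfolding mat_vec_def norm_mult[symmetric] by (rule norm_sum)
    also have "\<dots> \<le> (\<Sum>T\<in>C. cmod (B S T) * l2_norm C v)"
      by (intro sum_mono mult_left_mono l2_norm_entry_le assms) auto
    finally show "cmod (mat_vec C B v S) \<le> (\<Sum>T\<in>C. cmod (B S T)) * l2_norm C v"
      by (simp add: sum_distrib_right)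
  qed
  finally show ?thesis by (simp add: sum_distrib_right)
qed

lemma bdd_above_mat_vec:
  assumes "finite C"
  shows "bdd_above {l2_norm C (mat_vec C B v) | v. l2_norm C v \<le> 1}"
proof (rule bdd_aboveI)
  fix x assume "x \<in> {l2_norm C (mat_vec C B v) | v. l2_norm C v \<le> 1}"
  then obtain v where "x = l2_norm C (mat_vec C B v)" and v: "l2_norm C v \<le> 1" by auto
  have "x \<le> (\<Sum>S\<in>C. \<Sum>T\<in>C. cmod (B S T)) * l2_norm C v"
    using mat_vec_le_entry_sum[OF assms, of B v] \<open>x = _\<close> by simp
  also have "\<dots> \<le> (\<Sum>S\<in>C. \<Sum>T\<in>C. cmod (B S T))"
    using v by (intro mult_left_le) (auto intro!: sum_nonneg)
  finally show "x \<le> (\<Sum>S\<in>C. \<Sum>T\<in>C. cmod (B S T))" .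
qed

lemma mat_norm_upper:
  "finite C \<Longrightarrow> l2_norm C v \<le> 1 \<Longrightarrow> l2_norm C (mat_vec C B v) \<le> mat_norm C B"
  unfolding mat_norm_def by (rule cSup_upper) (auto intro: bdd_above_mat_vec)

lemma mat_vec_zero [simp]: "mat_vec C B (\<lambda>_. 0) = (\<lambda>_. 0)"
  unfolding mat_vec_def by simp

lemma mat_norm_nonneg: "finite C \<Longrightarrow> 0 \<le> mat_norm C B"
  using mat_norm_upper[of C "\<lambda>_. 0" B] by simp

lemma mat_norm_least:
  assumes "\<And>v. l2_norm C v \<le> 1 \<Longrightarrow> l2_norm C (mat_vec C B v) \<le> K"
  shows "mat_norm C B \<le> K"
  unfolding mat_norm_def
proof (rule cSup_least)
  show "{l2_norm C (mat_vec C B v) | v. l2_norm C v \<le> 1} \<noteq> {}"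
  proof -
    have "l2_norm C (mat_vec C B (\<lambda>_. 0)) \<in> {l2_norm C (mat_vec C B v) | v. l2_norm C v \<le> 1}"
      by (intro CollectI exI[of _ "\<lambda>_. 0"]) simp
    then show ?thesis by blast
  qed
qed (use assms in auto)

lemma mat_vec_le_mat_norm:
  assumes "finite C"
  shows "l2_norm C (mat_vec C B v) \<le> mat_norm C B * l2_norm C v"
proof (cases "l2_norm C v = 0")
  case True
  then have "mat_vec C B v = (\<lambda>_. 0)"
    using assms by (simp add: l2_norm_eq_0_iff mat_vec_def)
  then show ?thesis using True by simp
next
  case False
  define c where "c = l2_norm C v"
  have c: "c > 0" using False l2_norm_nonneg[of C v] unfolding c_def by simp
  have "l2_norm C (\<lambda>T. complex_of_real (1 / c) * v T) = 1"
    using c unfolding l2_norm_scale c_def by (simp add: norm_divide)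
  then have "l2_norm C (mat_vec C B (\<lambda>T. complex_of_real (1 / c) * v T)) \<le> mat_norm C B"
    by (intro mat_norm_upper assms) simp
  then have "l2_norm C (mat_vec C B v) / c \<le> mat_norm C B"
    using c unfolding mat_vec_scale l2_norm_scale by (simp add: norm_divide)
  then show ?thesis using c unfolding c_def by (simp add: pos_divide_le_eq)
qed


lemma mat_norm_add_le:
  assumes "finite C"
  shows "mat_norm C (\<lambda>S T. B1 S T + B2 S T) \<le> mat_norm C B1 + mat_norm C B2"
proof (rule mat_norm_least)
  fix v assume "l2_norm C v \<le> 1"
  have "mat_vec C (\<lambda>S T. B1 S T + B2 S T) v = (\<lambda>S. mat_vec C B1 v S + mat_vec C B2 v S)"
    unfolding mat_vec_def by (simp add: distrib_right sum.distrib)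
  then show "l2_norm C (mat_vec C (\<lambda>S T. B1 S T + B2 S T) v) \<le> mat_norm C B1 + mat_norm C B2"
    using l2_norm_add_le[of C "mat_vec C B1 v" "mat_vec C B2 v"]
      mat_norm_upper[OF assms \<open>l2_norm C v \<le> 1\<close>, of B1]
      mat_norm_upper[OF assms \<open>l2_norm C v \<le> 1\<close>, of B2]
    by simp
qed

lemma mat_norm_scale_le:
  assumes "finite C"
  shows "mat_norm C (\<lambda>S T. c * B S T) \<le> cmod c * mat_norm C B"
proof (rule mat_norm_least)
  fix v assume "l2_norm C v \<le> 1"
  have "mat_vec C (\<lambda>S T. c * B S T) v = (\<lambda>S. c * mat_vec C B v S)"
    unfolding mat_vec_def by (simp add: sum_distrib_left mult.assoc)
  then show "l2_norm C (mat_vec C (\<lambda>S T. c * B S T) v) \<le> cmod c * mat_norm C B"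
    using mat_norm_upper[OF assms \<open>l2_norm C v \<le> 1\<close>, of B]
    by (simp add: l2_norm_scale mult_left_mono)
qed

lemma mat_norm_diff_le:
  assumes "finite C"
  shows "mat_norm C (\<lambda>S T. B1 S T - B2 S T) \<le> mat_norm C B1 + mat_norm C B2"
  using mat_norm_add_le[OF assms, of B1 "\<lambda>S T. (-1) * B2 S T"] mat_norm_scale_le[OF assms, of "-1" B2]
  by simp

lemma mat_norm_sum_le:
  assumes "finite C" "finite N"
  shows "mat_norm C (\<lambda>S T. \<Sum>n\<in>N. E n S T) \<le> (\<Sum>n\<in>N. mat_norm C (E n))"
  using assms(2)
proof (induction N rule: finite_induct)
  case empty
  show ?case by (simp add: mat_norm_least mat_vec_def)
next
  case (insert a N)
  then show ?case
    using mat_norm_add_le[OF assms(1), of "E a" "\<lambda>S T. \<Sum>n\<in>N. E n S T"] by simp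
qed

lemma mat_norm_limit_le:
  assumes C: "finite C"
    and lim: "\<And>S T. (\<lambda>N. B N S T) \<longlonglongrightarrow> D S T"
    and bound: "\<And>N. mat_norm C (B N) \<le> K"
  shows "mat_norm C D \<le> K"
proof (rule mat_norm_least)
  fix v assume v: "l2_norm C v \<le> 1"
  have "(\<lambda>N. mat_vec C (B N) v S) \<longlonglongrightarrow> mat_vec C D v S" for S
    unfolding mat_vec_def by (intro tendsto_intros lim)
  then have "(\<lambda>N. l2_norm C (mat_vec C (B N) v)) \<longlonglongrightarrow> l2_norm C (mat_vec C D v)"
    unfolding l2_norm_def L2_set_def by (intro tendsto_intros)
  moreover have "l2_norm C (mat_vec C (B N) v) \<le> K" for N
    using mat_norm_upper[OF C v, of "B N"] bound[of N] by simp
  ultimately show "l2_norm C (mat_vec C D v) \<le> K"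
    by (intro tendsto_upperbound) (auto intro: always_eventually)
qed

lemma mat_norm_suminf_le:
  assumes C: "finite C"
    and sums: "\<And>S T. (\<lambda>n. a n * E n S T) sums D S T"
    and bound: "\<And>n. mat_norm C (E n) \<le> b n"
    and K: "(\<lambda>n. cmod (a n) * b n) sums K"
  shows "mat_norm C D \<le> K"
proof (rule mat_norm_limit_le[OF C])
  show "(\<lambda>N. \<Sum>n<N. a n * E n S T) \<longlonglongrightarrow> D S T" for S T
    using sums unfolding sums_def .
  fix N
  have "mat_norm C (\<lambda>S T. \<Sum>n<N. a n * E n S T) \<le> (\<Sum>n<N. mat_norm C (\<lambda>S T. a n * E n S T))"
    by (rule mat_norm_sum_le[OF C]) simp
  also have "\<dots> \<le> (\<Sum>n<N. cmod (a n) * b n)"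
    by (intro sum_mono order_trans[OF mat_norm_scale_le[OF C]] mult_left_mono bound) simp
  also have "\<dots> \<le> K"
  proof (rule sum_le_suminf[OF sums_summable[OF K], unfolded sums_unique[OF K, symmetric]])
    show "0 \<le> cmod (a n) * b n" for n
      using mat_norm_nonneg[OF C, of "E n"] bound[of n] by simp
  qed simp
  finally show "mat_norm C (\<lambda>S T. \<Sum>n<N. a n * E n S T) \<le> K" .
qed

lemma mat_norm_diag_mult_le:
  assumes C: "finite C" and F: "0 \<le> F" "\<And>S. S \<in> C \<Longrightarrow> cmod (f S) \<le> F"
  shows "mat_norm C (\<lambda>S T. f S * B S T) \<le> F * mat_norm C B"
    and "mat_norm C (\<lambda>S T. B S T * f T) \<le> mat_norm C B * F"
proof -
  have scaled: "l2_norm C (\<lambda>S. f S * w S) \<le> F * l2_norm C w" for w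
  proof -
    have "l2_norm C (\<lambda>S. f S * w S) \<le> L2_set (\<lambda>S. F * cmod (w S)) C"
      unfolding l2_norm_def
      by (rule L2_set_mono) (auto simp: norm_mult intro: mult_right_mono F)
    then show ?thesis
      using F unfolding l2_norm_def by (simp add: L2_set_right_distrib)
  qed
  show "mat_norm C (\<lambda>S T. f S * B S T) \<le> F * mat_norm C B"
  proof (rule mat_norm_least)
    fix v assume v: "l2_norm C v \<le> 1"
    have "mat_vec C (\<lambda>S T. f S * B S T) v = (\<lambda>S. f S * mat_vec C B v S)"
      unfolding mat_vec_def by (simp add: sum_distrib_left mult.assoc)
    then show "l2_norm C (mat_vec C (\<lambda>S T. f S * B S T) v) \<le> F * mat_norm C B"
      using scaled[of "mat_vec C B v"] mat_norm_upper[OF C v, of B] F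
      by (metis mult_left_mono order_trans)
  qed
  show "mat_norm C (\<lambda>S T. B S T * f T) \<le> mat_norm C B * F"
  proof (rule mat_norm_least)
    fix v assume v: "l2_norm C v \<le> 1"
    have "mat_vec C (\<lambda>S T. B S T * f T) v = mat_vec C B (\<lambda>T. f T * v T)"
      unfolding mat_vec_def by (simp add: mult.assoc)
    moreover have "l2_norm C (mat_vec C B (\<lambda>T. f T * v T)) \<le> mat_norm C B * (F * l2_norm C v)"
      using mat_vec_le_mat_norm[OF C, of B "\<lambda>T. f T * v T"] scaled[of v] mat_norm_nonneg[OF C, of B]
      by (meson mult_left_mono order_trans)
    moreover have "mat_norm C B * (F * l2_norm C v) \<le> mat_norm C B * F"
      using v F mat_norm_nonneg[OF C, of B] by (intro mult_left_mono mult_left_le) auto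
    ultimately show "l2_norm C (mat_vec C (\<lambda>S T. B S T * f T) v) \<le> mat_norm C B * F"
      by simp
  qed
qed

lemma mat_norm_diag_commutator_power_le:
  assumes C: "finite C" and F: "0 \<le> F" "\<And>S. S \<in> C \<Longrightarrow> cmod (m S) \<le> F"
  shows "mat_norm C (schur_mult (\<lambda>S T. (m S - m T) ^ n) B) \<le> (2 * F) ^ n * mat_norm C B"
proof (induction n)
  case 0
  show ?case by (simp add: schur_mult_def)
next
  case (Suc n)
  define E where "E = schur_mult (\<lambda>S T. (m S - m T) ^ n) B"
  have "schur_mult (\<lambda>S T. (m S - m T) ^ Suc n) B = (\<lambda>S T. m S * E S T - E S T * m T)"
    unfolding E_def schur_mult_def by (intro ext) (simp add: algebra_simps)
  then have "mat_norm C (schur_mult (\<lambda>S T. (m S - m T) ^ Suc n) B)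
      \<le> mat_norm C (\<lambda>S T. m S * E S T) + mat_norm C (\<lambda>S T. E S T * m T)"
    using mat_norm_diff_le[OF C] by simp
  also have "\<dots> \<le> 2 * F * mat_norm C E"
    using mat_norm_diag_mult_le[where f = m and B = E, OF C F] by (simp add: algebra_simps)
  also have "\<dots> \<le> (2 * F) ^ Suc n * mat_norm C B"
    using Suc F unfolding E_def by (simp add: mult_left_mono)
  finally show ?case .
qed

lemma schur_mult_schur_mult:
  "schur_mult f (schur_mult g B) = schur_mult (\<lambda>S T. f S T * g S T) B"
  unfolding schur_mult_def by (simp add: mult.assoc)

lemma schur_mult_commute: "schur_mult f (schur_mult g B) = schur_mult g (schur_mult f B)"
  unfolding schur_mult_schur_mult by (simp add: mult.commute)

lemma resolvent_deriv_sums: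
  fixes c z \<delta> b :: "'a :: {real_normed_field, banach}"
  assumes "norm (z * \<delta>) < norm c"
  shows "(\<lambda>j. of_nat (Suc j) * z ^ j / c ^ (j + 2) * (\<delta> ^ Suc j * b)) sums (\<delta> / (c - z * \<delta>)\<^sup>2 * b)"
proof -
  define w where "w = z * \<delta> / c"
  have "c \<noteq> 0" and "c - z * \<delta> \<noteq> 0"
    using assms by auto
  have "norm w < 1"
    using assms \<open>c \<noteq> 0\<close> unfolding w_def by (simp add: norm_divide divide_less_eq)
  then have geom: "(\<lambda>j. of_nat (Suc j) * w ^ j * (\<delta> * b / c\<^sup>2)) sums (1 / (1 - w)\<^sup>2 * (\<delta> * b / c\<^sup>2))"
    by (rule sums_mult2[OF geometric_deriv_sums])
  have terms: "of_nat (Suc j) * z ^ j / c ^ (j + 2) * (\<delta> ^ Suc j * b) = of_nat (Suc j) * w ^ j * (\<delta> * b / c\<^sup>2)" for j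
    unfolding w_def using \<open>c \<noteq> 0\<close>
    by (simp add: power_divide power_mult_distrib power_add field_simps power2_eq_square)
  have limit: "\<delta> / (c - z * \<delta>)\<^sup>2 * b = 1 / (1 - w)\<^sup>2 * (\<delta> * b / c\<^sup>2)"
    unfolding w_def using \<open>c \<noteq> 0\<close> \<open>c - z * \<delta> \<noteq> 0\<close> by (simp add: field_simps power2_eq_square)
  show ?thesis
    unfolding terms limit by (rule geom)
qed

lemma mat_norm_schur_resolvent_deriv_le:
  fixes m :: "'a \<Rightarrow> complex" and c z :: complex
  assumes C: "finite C" and m: "\<And>S. cmod (m S) \<le> n / 2" and z: "cmod z * n < cmod c"
  shows "mat_norm C (schur_mult (\<lambda>S T. (m S - m T) / (c - z * (m S - m T))\<^sup>2) B)
      \<le> n / (cmod c - cmod z * n)\<^sup>2 * mat_norm C B"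
proof -
  have n: "0 \<le> n" using m[of undefined] norm_ge_zero[of "m undefined"] by linarith
  define a where "a j = of_nat (Suc j) * z ^ j / c ^ (j + 2)" for j
  show ?thesis
  proof (rule mat_norm_suminf_le[OF C, where a = a and E = "\<lambda>j. schur_mult (\<lambda>S T. (m S - m T) ^ Suc j) B"
        and b = "\<lambda>j. n ^ Suc j * mat_norm C B"])
    fix S T
    have "cmod (m S - m T) \<le> n"
      using norm_triangle_ineq4[of "m S" "m T"] m[of S] m[of T] by linarith
    then have "cmod (z * (m S - m T)) < cmod c"
      using z by (smt (verit) mult_left_mono norm_ge_zero norm_mult)
    then show "(\<lambda>j. a j * schur_mult (\<lambda>S T. (m S - m T) ^ Suc j) B S T) sums
        schur_mult (\<lambda>S T. (m S - m T) / (c - z * (m S - m T))\<^sup>2) B S T"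
      unfolding a_def schur_mult_def by (rule resolvent_deriv_sums)
  next
    show "mat_norm C (schur_mult (\<lambda>S T. (m S - m T) ^ Suc j) B) \<le> n ^ Suc j * mat_norm C B" for j
      using mat_norm_diag_commutator_power_le[of C "n / 2" m "Suc j" B] C m n by simp
  next
    have "norm (cmod z * n) < norm (cmod c)"
      using z n by simp
    moreover have "cmod (a j) = of_nat (Suc j) * cmod z ^ j / cmod c ^ (j + 2)" for j
      unfolding a_def by (simp only: norm_mult norm_divide norm_power norm_of_nat)
    ultimately show "(\<lambda>j. cmod (a j) * (n ^ Suc j * mat_norm C B)) sums (n / (cmod c - cmod z * n)\<^sup>2 * mat_norm C B)"
      by (simp only: resolvent_deriv_sums)
  qed
qed

section \<open>Fock-space operators in the occupation-number basis\<close>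

lemma finite_sites: "finite (sites d L)"
proof (rule finite_subset)
  show "sites d L \<subseteq> {xs. set xs \<subseteq> {..<L} \<and> length xs = d}"
    unfolding sites_def by (auto simp: in_set_conv_nth)
qed (simp add: finite_lists_length_eq)

lemma finite_configs: "finite (configs d L)"
  unfolding configs_def modes_def using finite_sites by simp

lemma op_norm_eq_mat_norm: "op_norm d L B = mat_norm (configs d L) B"
  unfolding op_norm_def mat_norm_def l2_norm_def mat_vec_def L2_set_def by simp

lemma hf_configs_subset: "hf_configs d L \<subseteq> configs d L"
  unfolding hf_configs_def by auto

lemma op_mult_diag_left:
  assumes "\<And>S T. D S T = (if S = T then f S else 0)" "\<And>S. S \<notin> configs d L \<Longrightarrow> f S = 0"
  shows "op_mult d L D Y = (\<lambda>S T. f S * Y S T)"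
proof (intro ext)
  fix S T
  have "op_mult d L D Y S T = (\<Sum>R\<in>configs d L. if S = R then f S * Y S T else 0)"
    unfolding op_mult_def assms(1) by (rule sum.cong) auto
  then show "op_mult d L D Y S T = f S * Y S T"
    using finite_configs assms(2) by (cases "S \<in> configs d L") auto
qed

lemma op_mult_diag_right:
  assumes "\<And>S T. D S T = (if S = T then f S else 0)" "\<And>S. S \<notin> configs d L \<Longrightarrow> f S = 0"
  shows "op_mult d L Y D = (\<lambda>S T. Y S T * f T)"
proof (intro ext)
  fix S T
  have "op_mult d L Y D S T = (\<Sum>R\<in>configs d L. if T = R then Y S T * f T else 0)"
    unfolding op_mult_def assms(1) by (rule sum.cong) auto
  then show "op_mult d L Y D S T = Y S T * f T"
    using finite_configs assms(2) by (cases "T \<in> configs d L") auto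
qed

lemma compress_apply:
  "compress d L A S T = (if S \<in> hf_configs d L \<and> T \<in> hf_configs d L then A S T else 0)"
proof -
  define p where "p S = (if S \<in> hf_configs d L then 1 else 0 :: complex)" for S
  have diag: "P_hf d L S T = (if S = T then p S else 0)" for S T
    unfolding P_hf_def p_def by simp
  have p0: "p S = 0" if "S \<notin> configs d L" for S
    using that hf_configs_subset unfolding p_def by auto
  have "op_mult d L (P_hf d L) Y = (\<lambda>S T. p S * Y S T)" for Y
    by (rule op_mult_diag_left[OF diag p0])
  moreover have "op_mult d L Y (P_hf d L) = (\<lambda>S T. Y S T * p T)" for Y
    by (rule op_mult_diag_right[OF diag p0])
  ultimately show ?thesis
    unfolding compress_def p_def by simp
qed

lemma cre_neq_zeroD:
  "cre d L j S R \<noteq> 0 \<Longrightarrow> R \<in> configs d L \<and> j \<in> modes d L \<and> j \<notin> R \<and> S = insert j R"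
  unfolding cre_def by (auto split: if_splits)

lemma num_apply:
  "num d L j S T = (if S = T \<and> S \<in> configs d L \<and> j \<in> modes d L \<and> j \<in> S then 1 else 0)"
    (is "_ = (if ?occ then 1 else 0)")
proof -
  have summand: "cre d L j S R * cnj (cre d L j T R) = (if R = S - {j} \<and> ?occ then 1 else 0)" for R
  proof (cases "R = S - {j} \<and> ?occ")
    case True
    then have "R \<in> configs d L" "j \<in> modes d L" "j \<notin> R" "S = insert j R" "T = insert j R"
      unfolding configs_def by auto
    moreover have "(-1::complex) ^ n * cnj ((-1) ^ n) = 1" for n
      by (simp add: power_mult_distrib[symmetric])
    ultimately have "cre d L j S R * cnj (cre d L j T R) = 1"
      unfolding cre_def by simp
    then show ?thesis using True by auto
  next
    case False
    then have "cre d L j S R = 0 \<or> cre d L j T R = 0"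
      using cre_neq_zeroD[of d L j S R] cre_neq_zeroD[of d L j T R] unfolding configs_def by auto
    then show ?thesis using False by auto
  qed
  have "num d L j S T = (\<Sum>R\<in>configs d L. if R = S - {j} \<and> ?occ then 1 else 0)"
    unfolding num_def op_mult_def ann_def summand ..
  also have "\<dots> = (if ?occ then 1 else 0)"
  proof (cases ?occ)
    case True
    then have "(\<Sum>R\<in>configs d L. if R = S - {j} \<and> ?occ then 1 else 0)
        = (\<Sum>R\<in>configs d L. if R = S - {j} then 1 else 0)"
      by (intro sum.cong) auto
    also have "\<dots> = 1"
      using True finite_configs[of d L] unfolding configs_def by (auto simp: sum.delta)
    finally show ?thesis using True by auto
  next
    case False
    then show ?thesis by (simp only: if_False simp_thms sum.neutral_const)
  qed
  finally show ?thesis .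
qed

definition site_mag :: "mode set \<Rightarrow> site \<Rightarrow> complex" where
  "site_mag S x = eta x * ((if (x, True) \<in> S then 1 else 0) - (if (x, False) \<in> S then 1 else 0)) / 2"

definition mag_on :: "site set \<Rightarrow> mode set \<Rightarrow> complex" where
  "mag_on X S = (\<Sum>x\<in>X. site_mag S x)"

definition M_eigval :: "nat \<Rightarrow> nat \<Rightarrow> mode set \<Rightarrow> complex" where
  "M_eigval d L S = (if S \<in> configs d L then mag_on (sites d L) S else 0)"

lemma norm_mag_on_le: "cmod (mag_on X S) \<le> real (card X) / 2"
proof -
  have "cmod (site_mag S x) \<le> 1 / 2" for x
    unfolding site_mag_def eta_def by (auto simp: norm_mult norm_divide norm_power)
  then have "cmod (mag_on X S) \<le> real (card X) * (1 / 2)"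
    unfolding mag_on_def by (intro order_trans[OF norm_sum] sum_bounded_above)
  then show ?thesis by simp
qed

lemma mag_on_diff_eq:
  assumes "finite Y" "X \<subseteq> Y" and agree: "S - {j. fst j \<in> X} = T - {j. fst j \<in> X}"
  shows "mag_on Y S - mag_on Y T = mag_on X S - mag_on X T"
proof -
  have "site_mag S x = site_mag T x" if "x \<notin> X" for x
  proof -
    have "(x, b) \<in> S - {j. fst j \<in> X} \<longleftrightarrow> (x, b) \<in> T - {j. fst j \<in> X}" for b
      using agree by simp
    then have "(x, b) \<in> S \<longleftrightarrow> (x, b) \<in> T" for b
      using that by simp
    then show ?thesis unfolding site_mag_def by simp
  qed
  then have "mag_on (Y - X) S = mag_on (Y - X) T"
    unfolding mag_on_def by (intro sum.cong) auto
  moreover have "mag_on Y U = mag_on (Y - X) U + mag_on X U" for U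
    unfolding mag_on_def using sum.subset_diff[OF assms(2,1)] by simp
  ultimately show ?thesis by simp
qed

lemma Mop_apply: "Mop d L S T = (if S = T then M_eigval d L S else 0)"
proof (cases "S = T \<and> S \<in> configs d L")
  case True
  have "Mop d L S S = (\<Sum>x\<in>sites d L. site_mag S x)"
    unfolding Mop_def num_apply site_mag_def using True
    by (intro sum.cong) (auto simp: modes_def)
  then show ?thesis using True unfolding M_eigval_def mag_on_def by auto
next
  case False
  then show ?thesis unfolding Mop_def num_apply M_eigval_def by auto
qed

lemma ad_M_eq_schur_mult:
  "ad_M d L C = schur_mult (\<lambda>S T. M_eigval d L S - M_eigval d L T) C"
proof -
  have M0: "M_eigval d L S = 0" if "S \<notin> configs d L" for S
    using that unfolding M_eigval_def by simp
  have "op_mult d L (Mop d L) C = (\<lambda>S T. M_eigval d L S * C S T)"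
    by (rule op_mult_diag_left[OF Mop_apply M0])
  moreover have "op_mult d L C (Mop d L) = (\<lambda>S T. C S T * M_eigval d L T)"
    by (rule op_mult_diag_right[OF Mop_apply M0])
  ultimately show ?thesis
    unfolding ad_M_def op_comm_def schur_mult_def by (simp add: algebra_simps)
qed

lemma ad_M_schur_mult: "ad_M d L (schur_mult f C) = schur_mult f (ad_M d L C)"
  unfolding ad_M_eq_schur_mult by (rule schur_mult_commute)

lemma loc_alg_agree_outside:
  assumes "A \<in> loc_alg d L X" "A S T \<noteq> 0"
  shows "S - {j. fst j \<in> X} = T - {j. fst j \<in> X}"
  using assms
proof (induction arbitrary: S T rule: loc_alg.induct)
  case unit
  then show ?case unfolding op_id_def by (auto split: if_splits)
next
  case (cre x \<sigma>)
  then show ?case by (auto dest!: cre_neq_zeroD)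
next
  case (ann x \<sigma>)
  then show ?case unfolding ann_def by (auto dest!: cre_neq_zeroD)
next
  case (add A B)
  then have "A S T \<noteq> 0 \<or> B S T \<noteq> 0" by auto
  then show ?case using add.IH by blast
next
  case (smult A c)
  then show ?case by simp
next
  case (mult A B)
  obtain R where "A S R * B R T \<noteq> 0"
    using mult.prems unfolding op_mult_def by (rule sum.not_neutral_contains_not_neutral)
  then have "S - {j. fst j \<in> X} = R - {j. fst j \<in> X}" "R - {j. fst j \<in> X} = T - {j. fst j \<in> X}"
    using mult.IH by auto
  then show ?case by simp
qed

lemma ad_M_compress_loc_alg:
  assumes "X \<subseteq> sites d L" "A \<in> loc_alg d L X"
  shows "ad_M d L (compress d L A) = schur_mult (\<lambda>S T. mag_on X S - mag_on X T) (compress d L A)"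
proof -
  have "M_eigval d L S - M_eigval d L T = mag_on X S - mag_on X T"
    if "compress d L A S T \<noteq> 0" for S T
  proof -
    have "S \<in> configs d L" "T \<in> configs d L" "A S T \<noteq> 0"
      using that hf_configs_subset unfolding compress_apply by (auto split: if_splits)
    then show ?thesis
      unfolding M_eigval_def
      using mag_on_diff_eq[OF finite_sites assms(1) loc_alg_agree_outside[OF assms(2)]] by simp
  qed
  then show ?thesis
    unfolding ad_M_eq_schur_mult schur_mult_def by (intro ext) (metis mult_not_zero)
qed

section \<open>The series I_h on operators on which ad_M is a Schur multiplier\<close>

lemma ad_M_funpow_schur_mult:
  assumes "ad_M d L C = schur_mult \<delta> C"
  shows "(ad_M d L ^^ n) C = schur_mult (\<lambda>S T. \<delta> S T ^ n) C"
proof (induction n)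
  case 0
  show ?case by (simp add: schur_mult_def)
next
  case (Suc n)
  then show ?case
    by (simp add: ad_M_schur_mult assms schur_mult_schur_mult mult.commute)
qed

lemma norm_of_int_mult_of_real: "cmod (of_int k * complex_of_real U) = \<bar>real_of_int k\<bar> * \<bar>U\<bar>"
  by (simp add: norm_mult)

lemma I_op_eq_schur_mult:
  assumes adC: "ad_M d L C = schur_mult \<delta> C"
    and small: "\<And>S T. cmod (h * \<delta> S T) < \<bar>real_of_int k\<bar> * U"
  shows "I_op d L k U h C = schur_mult (\<lambda>S T. 1 / (of_int k * of_real U - h * \<delta> S T)) C"
proof (intro ext)
  fix S T
  define c where "c = of_int k * complex_of_real U"
  define w where "w = h * \<delta> S T / c"
  have "\<bar>real_of_int k\<bar> * U \<le> cmod c"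
    unfolding c_def norm_of_int_mult_of_real by (simp add: mult_left_mono)
  then have c: "cmod (h * \<delta> S T) < cmod c"
    using small[of S T] by linarith
  then have "c \<noteq> 0" by auto
  have "norm w < 1"
    using c unfolding w_def by (simp add: norm_divide divide_less_eq)
  then have "(\<lambda>n. w ^ n * C S T) sums (1 / (1 - w) * C S T)"
    by (rule sums_mult2[OF geometric_sums])
  moreover have "(h / c) ^ n * (ad_M d L ^^ n) C S T = w ^ n * C S T" for n
    unfolding ad_M_funpow_schur_mult[OF adC] schur_mult_def w_def
    by (simp add: power_mult_distrib power_divide)
  ultimately have "I_op d L k U h C S T = 1 / c * (1 / (1 - w) * C S T)"
    unfolding I_op_def c_def[symmetric] by (simp add: sums_iff)
  also have "\<dots> = 1 / (c - h * \<delta> S T) * C S T"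
    using \<open>c \<noteq> 0\<close> c unfolding w_def by (auto simp: field_simps)
  finally show "I_op d L k U h C S T = schur_mult (\<lambda>S T. 1 / (of_int k * of_real U - h * \<delta> S T)) C S T"
    unfolding schur_mult_def c_def .
qed

lemma I_op_ad_M_I_op:
  assumes adC: "ad_M d L C = schur_mult \<delta> C"
    and small: "\<And>S T. cmod (h * \<delta> S T) < \<bar>real_of_int k\<bar> * U"
  shows "I_op d L k U h (ad_M d L (I_op d L k U h C))
       = schur_mult (\<lambda>S T. \<delta> S T / (of_int k * of_real U - h * \<delta> S T)\<^sup>2) C"
proof -
  define f where "f S T = 1 / (of_int k * of_real U - h * \<delta> S T)" for S T
  have I_eq: "I_op d L k U h C' = schur_mult f C'" if "ad_M d L C' = schur_mult \<delta> C'" for C'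
    unfolding f_def by (rule I_op_eq_schur_mult[OF that small])
  have ad_I_C: "ad_M d L (I_op d L k U h C) = schur_mult \<delta> (schur_mult f C)"
    unfolding I_eq[OF adC] ad_M_schur_mult adC by (rule schur_mult_commute)
  have "ad_M d L (ad_M d L (I_op d L k U h C)) = schur_mult \<delta> (ad_M d L (I_op d L k U h C))"
    unfolding ad_I_C by (simp add: ad_M_schur_mult adC schur_mult_schur_mult mult_ac)
  then have "I_op d L k U h (ad_M d L (I_op d L k U h C)) = schur_mult f (schur_mult \<delta> (schur_mult f C))"
    using I_eq unfolding ad_I_C by blast
  then show ?thesis
    unfolding schur_mult_def f_def by (simp add: power2_eq_square)
qed

lemma I_op_has_field_derivative:
  assumes adC: "ad_M d L C = schur_mult \<delta> C"
    and bound: "\<And>S T. cmod (\<delta> S T) \<le> n"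
    and z: "cmod z * n < \<bar>real_of_int k\<bar> * U"
  shows "((\<lambda>h. I_op d L k U h C S T) has_field_derivative
           I_op d L k U z (ad_M d L (I_op d L k U z C)) S T) (at z)"
proof -
  define c where "c = of_int k * complex_of_real U"
  define D where "D = {h. cmod h * n < \<bar>real_of_int k\<bar> * U}"
  have small: "cmod (h * \<delta> S T) < \<bar>real_of_int k\<bar> * U" if "h \<in> D" for h S T
  proof -
    have "cmod (h * \<delta> S T) \<le> cmod h * n"
      unfolding norm_mult by (simp add: mult_left_mono bound)
    then show ?thesis using that unfolding D_def by simp
  qed
  have "z \<in> D" using z unfolding D_def by simp
  have "\<bar>real_of_int k\<bar> * U \<le> cmod c"
    unfolding c_def norm_of_int_mult_of_real by (simp add: mult_left_mono)
  then have "c - z * \<delta> S T \<noteq> 0"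
    using small[OF \<open>z \<in> D\<close>, of S T] by auto
  then have deriv: "((\<lambda>h. C S T / (c - h * \<delta> S T)) has_field_derivative
      C S T * \<delta> S T / (c - z * \<delta> S T)\<^sup>2) (at z)"
    by (auto intro!: derivative_eq_intros simp: power2_eq_square)
  have "open D"
    unfolding D_def by (intro open_Collect_less continuous_intros)
  have I_eq: "C S T / (c - h * \<delta> S T) = I_op d L k U h C S T" if "h \<in> D" for h
  proof -
    have "I_op d L k U h C = schur_mult (\<lambda>S T. 1 / (c - h * \<delta> S T)) C"
      unfolding c_def by (rule I_op_eq_schur_mult[OF adC small[OF that]])
    then show ?thesis by (simp add: schur_mult_def)
  qed
  have "I_op d L k U z (ad_M d L (I_op d L k U z C)) S T
      = C S T * \<delta> S T / (c - z * \<delta> S T)\<^sup>2"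
    unfolding I_op_ad_M_I_op[OF adC small[OF \<open>z \<in> D\<close>]] schur_mult_def c_def by simp
  then show ?thesis
    using has_field_derivative_transform_within_open[OF deriv \<open>open D\<close> \<open>z \<in> D\<close> I_eq] by simp
qed

lemma op_norm_deriv_I_op_le:
  assumes adC: "ad_M d L C = schur_mult (\<lambda>S T. m S - m T) C"
    and m: "\<And>S. cmod (m S) \<le> n / 2"
    and "U > 0" and z: "cmod z * n < \<bar>real_of_int k\<bar> * U"
  shows "op_norm d L (\<lambda>S T. deriv (\<lambda>h. I_op d L k U h C S T) z)
      \<le> n / (\<bar>real_of_int k\<bar> * U - cmod z * n)\<^sup>2 * op_norm d L C"
proof -
  have bound: "cmod (m S - m T) \<le> n" for S T
    using norm_triangle_ineq4[of "m S" "m T"] m[of S] m[of T] by linarith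
  have small: "cmod (z * (m S - m T)) < \<bar>real_of_int k\<bar> * U" for S T
    using z bound[of S T] by (smt (verit) mult_left_mono norm_ge_zero norm_mult)
  have "(\<lambda>S T. deriv (\<lambda>h. I_op d L k U h C S T) z)
      = schur_mult (\<lambda>S T. (m S - m T) / (of_int k * of_real U - z * (m S - m T))\<^sup>2) C"
    unfolding I_op_ad_M_I_op[OF adC small, symmetric]
    by (intro ext DERIV_imp_deriv I_op_has_field_derivative[OF adC bound z])
  moreover have "cmod z * n < cmod (of_int k * complex_of_real U)"
    using z \<open>U > 0\<close> unfolding norm_of_int_mult_of_real by simp
  note mat_norm_schur_resolvent_deriv_le[where C = "configs d L" and m = m and n = n and z = z
      and c = "of_int k * complex_of_real U" and B = C, OF finite_configs m this]
  ultimately show ?thesis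
    unfolding op_norm_eq_mat_norm norm_of_int_mult_of_real using \<open>U > 0\<close> by simp
qed

lemma divide_square_diff_mono:
  fixes a s t K N :: real
  assumes "0 \<le> a" "s \<le> t" "t * a < K" "0 \<le> N"
  shows "a / (K - s * a)\<^sup>2 * N \<le> a / (K - t * a)\<^sup>2 * N"
proof -
  have "0 < K - t * a" "K - t * a \<le> K - s * a"
    using assms by (auto intro: mult_right_mono)
  then have "(K - t * a)\<^sup>2 \<le> (K - s * a)\<^sup>2" "0 < (K - t * a)\<^sup>2" "0 < (K - s * a)\<^sup>2"
    by (auto intro: power_mono)
  then show ?thesis
    using assms by (intro mult_right_mono divide_left_mono mult_pos_pos) auto
qed

theorem lemmaA4:
  fixes d L :: nat and h0 U :: real and k :: int and X :: "site set" and A :: fop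
  assumes "d \<ge> 1" and "even L" and "L \<ge> 2"
    and "h0 > 0" and "U > 0" and "k \<noteq> 0"
    and "X \<subseteq> sites d L"
    and "A \<in> loc_alg d L X"
    and "has_grade d L k A"
    and "\<bar>real_of_int k\<bar> * U > h0 * real (card X)"
  shows "(\<exists>S. open S \<and> complex_of_real ` {-h0..h0} \<subseteq> S \<and>
            (\<forall>P Q. (\<lambda>h. I_op d L k U h (compress d L A) P Q) holomorphic_on S))
       \<and> (\<forall>r::real. \<bar>r\<bar> \<le> h0 \<longrightarrow>
            (\<forall>P Q. ((\<lambda>h. I_op d L k U h (compress d L A) P Q) has_field_derivative
                     I_op d L k U (of_real r)
                       (ad_M d L (I_op d L k U (of_real r) (compress d L A))) P Q)
                   (at (of_real r)))
          \<and> op_norm d L (\<lambda>P Q. deriv (\<lambda>h. I_op d L k U h (compress d L A) P Q) (of_real r))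
              \<le> real (card X) / (\<bar>real_of_int k\<bar> * U - \<bar>r\<bar> * real (card X))\<^sup>2
                  * op_norm d L (compress d L A)
          \<and> real (card X) / (\<bar>real_of_int k\<bar> * U - \<bar>r\<bar> * real (card X))\<^sup>2
                  * op_norm d L (compress d L A)
              \<le> real (card X) / (\<bar>real_of_int k\<bar> * U - h0 * real (card X))\<^sup>2
                  * op_norm d L (compress d L A))"
proof -
  define B where "B = compress d L A"
  define D where "D = {z. cmod z * real (card X) < \<bar>real_of_int k\<bar> * U}"
  have adB: "ad_M d L B = schur_mult (\<lambda>P Q. mag_on X P - mag_on X Q) B"
    unfolding B_def using assms(7,8) by (rule ad_M_compress_loc_alg)
  have mag: "cmod (mag_on X P - mag_on X Q) \<le> real (card X)" for P Q
    using norm_triangle_ineq4[of "mag_on X P" "mag_on X Q"] norm_mag_on_le[of X P] norm_mag_on_le[of X Q]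
    by linarith
  have deriv: "((\<lambda>h. I_op d L k U h B P Q) has_field_derivative
      I_op d L k U z (ad_M d L (I_op d L k U z B)) P Q) (at z)" if "z \<in> D" for z P Q
    using that unfolding D_def by (intro I_op_has_field_derivative[OF adB mag]) simp
  have real_in_D: "complex_of_real r \<in> D" if "\<bar>r\<bar> \<le> h0" for r
  proof -
    have "\<bar>r\<bar> * real (card X) \<le> h0 * real (card X)"
      using that by (rule mult_right_mono) simp
    then show ?thesis using assms(10) unfolding D_def by simp
  qed
  have "open D"
    unfolding D_def by (intro open_Collect_less continuous_intros)
  then have "(\<lambda>h. I_op d L k U h B P Q) holomorphic_on D" for P Q
    using deriv holomorphic_on_open by blast
  moreover have "complex_of_real ` {-h0..h0} \<subseteq> D"
    using real_in_D by auto
  moreover have "op_norm d L (\<lambda>P Q. deriv (\<lambda>h. I_op d L k U h B P Q) (of_real r))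
      \<le> real (card X) / (\<bar>real_of_int k\<bar> * U - \<bar>r\<bar> * real (card X))\<^sup>2 * op_norm d L B"
    if "\<bar>r\<bar> \<le> h0" for r
    using op_norm_deriv_I_op_le[OF adB norm_mag_on_le assms(5), where z = "of_real r"] real_in_D[OF that]
    unfolding D_def by simp
  moreover have "real (card X) / (\<bar>real_of_int k\<bar> * U - \<bar>r\<bar> * real (card X))\<^sup>2 * op_norm d L B
      \<le> real (card X) / (\<bar>real_of_int k\<bar> * U - h0 * real (card X))\<^sup>2 * op_norm d L B"
    if "\<bar>r\<bar> \<le> h0" for r
    using that assms(10) mat_norm_nonneg[OF finite_configs] unfolding op_norm_eq_mat_norm
    by (intro divide_square_diff_mono) auto
  ultimately show ?thesis
    unfolding B_def[symmetric] using \<open>open D\<close> deriv real_in_D by blast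
qed

end
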